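(* In the setting described in the context, if the parametrisation $\mathcal P_0=(X,\Theta)$ is partially tight in parameter (PTIP), then $\mathcal P_0$ is uniformly ergodic. Likewise, if $\mathcal P_1=(\tilde X,\Theta)$ is PTIP, then $\mathcal P_1$ is uniformly ergodic.
   Context: Fix an observed value $y\in\mathbb R$. Consider the model $Y=X+Z_1$, $X=\Theta+Z_2$, where $Z_1,Z_2$ are independent real random variables, independent of $\Theta$, whose distributions are symmetric about $0$ and have continuous, bounded, everywhere positive Lebesgue densities $f_1,f_2$; $\Theta$ is given the improper flat (Lebesgue) prior on $\mathbb R$, and the posterior $\mathcal L(X,\Theta\mid Y=y)$ is proper. Write $\tilde X=X-\Theta$. For a parametrisation $\mathcal P=(U,\Theta)$ with $U\in\{X,\tilde X\}$, the Gibbs sampler started at $\Theta_0$ iterates, for $n\ge1$: draw $U_n\sim\mathcal L(U\mid Y=y,\Theta=\Theta_{n-1})$, then $\Theta_n\sim\mathcal L(\Theta\mid Y=y,U=U_n)$. The centred parametrisation is $\mathcal P_0=(X,\Theta)$ and the non-centred one is $\mathcal P_1=(\tilde X,\Theta)$. A parametrisation is called geometrically ergodic if its marginal chain $\{\Theta_n\}$ satisfies $\|\mathcal L(\Theta_n\mid Y=y,\Theta_0)-\mathcal L(\Theta\mid Y=y)\|_{TV}\le M(\Theta_0)r^n$ for all $n$, for some $r<1$ and some function $M$; it is called uniformly ergodic if in addition $M$ can be taken bounded. A parametrisation $(U,\Theta)$ is PTIP (partially tight in parameter) if for every $y$ there is $k>0$ with $\limsup_{|\theta|\to\infty}\mathbf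 P(|U|>k\mid Y=y,\Theta=\theta)<1$. *)

theory Defs
  imports "HOL-Probability.Probability"
begin

text \<open>Unnormalised joint posterior density of (X, Theta) given Y = y, for the model
  Y = X + Z1, X = Theta + Z2 with flat prior on Theta (centred parametrisation P0).\<close>
definition post0 :: "(real \<Rightarrow> real) \<Rightarrow> (real \<Rightarrow> real) \<Rightarrow> real \<Rightarrow> real \<Rightarrow> real \<Rightarrow> real" where
  "post0 f1 f2 y x \<theta> = f1 (y - x) * f2 (x - \<theta>)"

text \<open>Joint posterior density of (Xtilde, Theta) given Y = y, Xtilde = X - Theta
  (non-centred parametrisation P1); the change of variables has Jacobian 1.\<close>
definition post1 :: "(real \<Rightarrow> real) \<Rightarrow> (real \<Rightarrow> real) \<Rightarrow> real \<Rightarrow> real \<Rightarrow> real \<Rightarrow> real" where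
  "post1 f1 f2 y u \<theta> = post0 f1 f2 y (u + \<theta>) \<theta>"

definition cond_U :: "(real \<Rightarrow> real \<Rightarrow> real) \<Rightarrow> real \<Rightarrow> real measure" where
  "cond_U p \<theta> = density lborel
     (\<lambda>u. ennreal (p u \<theta>) / (\<integral>\<^sup>+ v. ennreal (p v \<theta>) \<partial>lborel))"

definition cond_Theta :: "(real \<Rightarrow> real \<Rightarrow> real) \<Rightarrow> real \<Rightarrow> real measure" where
  "cond_Theta p u = density lborel
     (\<lambda>\<theta>. ennreal (p u \<theta>) / (\<integral>\<^sup>+ t. ennreal (p u t) \<partial>lborel))"

definition marg_Theta :: "(real \<Rightarrow> real \<Rightarrow> real) \<Rightarrow> real measure" where
  "marg_Theta p = density lborel
     (\<lambda>\<theta>. (\<integral>\<^sup>+ u. ennreal (p u \<theta>) \<partial>lborel) /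
            (\<integral>\<^sup>+ t. \<integral>\<^sup>+ u. ennreal (p u t) \<partial>lborel \<partial>lborel))"

definition gibbs_step :: "(real \<Rightarrow> real \<Rightarrow> real) \<Rightarrow> real \<Rightarrow> real measure" where
  "gibbs_step p \<theta> = bind (cond_U p \<theta>) (cond_Theta p)"

fun gibbs_dist :: "(real \<Rightarrow> real \<Rightarrow> real) \<Rightarrow> real \<Rightarrow> nat \<Rightarrow> real measure" where
  "gibbs_dist p \<theta>0 0 = return borel \<theta>0"
| "gibbs_dist p \<theta>0 (Suc n) = bind (gibbs_dist p \<theta>0 n) (gibbs_step p)"

definition tv_dist :: "real measure \<Rightarrow> real measure \<Rightarrow> real" where
  "tv_dist M N = (SUP A \<in> sets borel. \<bar>measure M A - measure N A\<bar>)"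

definition geometrically_ergodic :: "(real \<Rightarrow> real \<Rightarrow> real) \<Rightarrow> bool" where
  "geometrically_ergodic p \<longleftrightarrow> (\<exists>r M. 0 \<le> r \<and> r < 1 \<and>
     (\<forall>\<theta>0 n. tv_dist (gibbs_dist p \<theta>0 n) (marg_Theta p) \<le> M \<theta>0 * r ^ n))"

definition uniformly_ergodic :: "(real \<Rightarrow> real \<Rightarrow> real) \<Rightarrow> bool" where
  "uniformly_ergodic p \<longleftrightarrow> (\<exists>r M. 0 \<le> r \<and> r < 1 \<and> bounded (range M) \<and>
     (\<forall>\<theta>0 n. tv_dist (gibbs_dist p \<theta>0 n) (marg_Theta p) \<le> M \<theta>0 * r ^ n))"

text \<open>PTIP for a parametrisation given by its posterior densities P y (for every y).\<close>
definition PTIP :: "(real \<Rightarrow> real \<Rightarrow> real \<Rightarrow> real) \<Rightarrow> bool" where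
  "PTIP P \<longleftrightarrow> (\<forall>y. \<exists>k>0.
     Limsup at_infinity (\<lambda>\<theta>. ereal (measure (cond_U (P y) \<theta>) {u. k < \<bar>u\<bar>})) < 1)"

end

theory Submission
  imports Defs
begin

text \<open>
  Both parametrisations are instances of one abstract situation (locale gibbs_density): a
  continuous, everywhere positive joint density p u \<theta> on the plane whose sections have
  integrals bounded by a constant B and whose total mass is finite.  For such p we show:
  (1) the conditional laws of U given \<Theta> and of \<Theta> given U are probability kernels, and the
      \<Theta>-marginal is stationary for one Gibbs sweep K;
  (2) a Doeblin minorisation K(\<theta>, A) \<ge> \<epsilon> Unif[-1,1](A) makes the sweep a contraction with
      factor 1 - \<epsilon> for the setwise distance (via a layer-cake comparison of integrals);
      iterating from the stationary law gives uniform ergodicity with rate 1 - \<epsilon>;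
  (3) tightness of U given \<Theta> = \<theta> for large \<theta>, together with positivity and continuity of p
      (uniform lower bounds on compact boxes), yields such a minorisation; PTIP is exactly
      this tightness.
\<close>

lemma nn_integral_pos_of_pos:
  fixes f :: "real \<Rightarrow> real"
  assumes [measurable]: "f \<in> borel_measurable borel" and pos: "\<And>x. 0 < f x"
  shows "0 < (\<integral>\<^sup>+x. ennreal (f x) \<partial>lborel)"
proof (rule ccontr)
  assume "\<not> 0 < (\<integral>\<^sup>+x. ennreal (f x) \<partial>lborel)"
  then have "(\<integral>\<^sup>+x. ennreal (f x) \<partial>lborel) = 0" by (simp add: not_gr_zero)
  then have "AE x in lborel. ennreal (f x) = 0" by (subst (asm) nn_integral_0_iff_AE) auto
  then obtain N where N: "{x\<in>space lborel. ennreal (f x) \<noteq> 0} \<subseteq> N" "emeasure lborel N = 0"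
    by (auto elim: AE_E)
  have "N = UNIV" using N(1) pos by (auto simp: less_le)
  then show False using N(2) by simp
qed

lemma nn_integral_shift:
  fixes f :: "real \<Rightarrow> real"
  assumes [measurable]: "f \<in> borel_measurable borel"
  shows "(\<integral>\<^sup>+x. ennreal (f (x - t)) \<partial>lborel) = (\<integral>\<^sup>+x. ennreal (f x) \<partial>lborel)"
  using nn_integral_real_affine[of "\<lambda>x. ennreal (f x)" 1 "-t"] by simp

lemma nn_integral_reflect:
  fixes f :: "real \<Rightarrow> real"
  assumes [measurable]: "f \<in> borel_measurable borel"
  shows "(\<integral>\<^sup>+x. ennreal (f (a - x)) \<partial>lborel) = (\<integral>\<^sup>+x. ennreal (f x) \<partial>lborel)"
  using nn_integral_real_affine[of "\<lambda>x. ennreal (f x)" "-1" a] by simp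

text \<open>Layer-cake formula for a probability measure on the reals; it lets us compare integrals
  of bounded functions under two setwise close measures.\<close>
lemma layer_cake_prob:
  fixes g :: "real \<Rightarrow> real"
  assumes nu: "prob_space \<nu>" "sets \<nu> = sets borel"
    and g[measurable]: "g \<in> borel_measurable borel" and g0: "\<And>x. 0 \<le> g x"
  shows "(\<integral>\<^sup>+x. ennreal (g x) \<partial>\<nu>) = (\<integral>\<^sup>+t. emeasure \<nu> {x. t < g x} * indicator {0..} t \<partial>lborel)"
proof -
  interpret prob_space \<nu> by fact
  interpret P: pair_sigma_finite \<nu> lborel
    by (intro pair_sigma_finite.intro sigma_finite_measure_axioms)
       (rule lborel.sigma_finite_measure_axioms)
  define H where "H = {(x, t::real). 0 \<le> t \<and> t < g x}"
  have "Measurable.pred (borel \<Otimes>\<^sub>M borel) (\<lambda>z::real\<times>real. 0 \<le> snd z \<and> snd z < g (fst z))"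
    by measurable
  then have "H \<in> sets (borel \<Otimes>\<^sub>M borel)"
    unfolding H_def pred_def by (simp add: space_pair_measure split_beta')
  then have H[measurable]: "H \<in> sets (\<nu> \<Otimes>\<^sub>M lborel)"
    using nu(2) by (simp add: sets_pair_measure_cong[of \<nu> borel lborel borel])
  have "(\<integral>\<^sup>+x. ennreal (g x) \<partial>\<nu>) = (\<integral>\<^sup>+x. \<integral>\<^sup>+t. indicator H (x, t) \<partial>lborel \<partial>\<nu>)"
  proof (rule nn_integral_cong)
    fix x
    have "(\<integral>\<^sup>+t. indicator H (x, t) \<partial>lborel) = (\<integral>\<^sup>+t. indicator {0..<g x} t \<partial>lborel)"
      by (intro nn_integral_cong) (simp add: H_def split: split_indicator)
    then show "ennreal (g x) = (\<integral>\<^sup>+t. indicator H (x, t) \<partial>lborel)" using g0[of x] by simp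
  qed
  also have "\<dots> = (\<integral>\<^sup>+t. \<integral>\<^sup>+x. indicator H (x, t) \<partial>\<nu> \<partial>lborel)"
    by (rule P.Fubini'[symmetric]) simp
  also have "\<dots> = (\<integral>\<^sup>+t. emeasure \<nu> {x. t < g x} * indicator {0..} t \<partial>lborel)"
  proof (rule nn_integral_cong)
    fix t
    have "(\<integral>\<^sup>+x. indicator H (x, t) \<partial>\<nu>) = (\<integral>\<^sup>+x. indicator {x. t < g x} x * indicator {0..} t \<partial>\<nu>)"
      by (intro nn_integral_cong) (simp add: H_def split: split_indicator)
    moreover have "{x. t < g x} \<in> sets \<nu>" using nu(2) by simp
    ultimately show "(\<integral>\<^sup>+x. indicator H (x, t) \<partial>\<nu>) = emeasure \<nu> {x. t < g x} * indicator {0..} t"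
      by (simp add: nn_integral_multc)
  qed
  finally show ?thesis .
qed

lemma nn_integral_le_of_setwise_le:
  fixes g :: "real \<Rightarrow> real"
  assumes mu: "prob_space \<mu>" "sets \<mu> = sets borel"
    and mu': "prob_space \<mu>'" "sets \<mu>' = sets borel"
    and g[measurable]: "g \<in> borel_measurable borel" and g0: "\<And>x. 0 \<le> g x" and gc: "\<And>x. g x \<le> c"
    and T: "0 \<le> T" "\<And>A. A \<in> sets borel \<Longrightarrow> measure \<mu> A \<le> measure \<mu>' A + T"
  shows "(\<integral>\<^sup>+x. ennreal (g x) \<partial>\<mu>) \<le> (\<integral>\<^sup>+x. ennreal (g x) \<partial>\<mu>') + ennreal (c * T)"
proof -
  interpret M: prob_space \<mu> by fact
  interpret M': prob_space \<mu>' by fact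
  have level_sets[measurable]: "{x. t < g x} \<in> sets borel" for t by measurable
  have "mono (\<lambda>t. - measure \<mu>' {x. t < g x})"
    by (intro monoI le_imp_neg_le M'.finite_measure_mono) (use mu'(2) in auto)
  then have "(\<lambda>t. - (- measure \<mu>' {x. t < g x})) \<in> borel_measurable borel"
    by (intro borel_measurable_uminus borel_measurable_mono)
  then have emm[measurable]: "(\<lambda>t. emeasure \<mu>' {x. t < g x}) \<in> borel_measurable borel"
    by (simp add: M'.emeasure_eq_measure)
  have c0: "0 \<le> c" using g0[of 0] gc[of 0] by linarith
  have "(\<integral>\<^sup>+x. ennreal (g x) \<partial>\<mu>) = (\<integral>\<^sup>+t. emeasure \<mu> {x. t < g x} * indicator {0..} t \<partial>lborel)"
    by (rule layer_cake_prob[OF mu g g0])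
  also have "\<dots> \<le> (\<integral>\<^sup>+t. emeasure \<mu>' {x. t < g x} * indicator {0..} t
                        + ennreal T * indicator {0..<c} t \<partial>lborel)"
  proof (rule nn_integral_mono)
    fix t :: real
    show "emeasure \<mu> {x. t < g x} * indicator {0..} t
          \<le> emeasure \<mu>' {x. t < g x} * indicator {0..} t + ennreal T * indicator {0..<c} t"
    proof (cases "t < c")
      case True
      have "emeasure \<mu> {x. t < g x} \<le> ennreal (measure \<mu>' {x. t < g x} + T)"
        using T(2)[OF level_sets] by (simp add: M.emeasure_eq_measure ennreal_leI)
      also have "\<dots> = emeasure \<mu>' {x. t < g x} + ennreal T"
        using T(1) by (simp add: M'.emeasure_eq_measure ennreal_plus)
      finally show ?thesis using True by (simp split: split_indicator)
    next
      case False
      then have "{x. t < g x} = {}" using gc by (auto simp: not_less intro: order_trans)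
      then show ?thesis by simp
    qed
  qed
  also have "\<dots> = (\<integral>\<^sup>+t. emeasure \<mu>' {x. t < g x} * indicator {0..} t \<partial>lborel)
                 + (\<integral>\<^sup>+t. ennreal T * indicator {0..<c} t \<partial>lborel)"
    by (rule nn_integral_add) auto
  also have "(\<integral>\<^sup>+t. ennreal T * indicator {0..<c} t \<partial>lborel) = ennreal (c * T)"
    using c0 T(1) by (simp add: nn_integral_cmult_indicator ennreal_mult' mult.commute)
  also have "(\<integral>\<^sup>+t. emeasure \<mu>' {x. t < g x} * indicator {0..} t \<partial>lborel) = (\<integral>\<^sup>+x. ennreal (g x) \<partial>\<mu>')"
    by (rule layer_cake_prob[OF mu' g g0, symmetric])
  finally show ?thesis .
qed

lemma prob_space_normalised_density:
  fixes f :: "real \<Rightarrow> ennreal"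
  assumes f[measurable]: "f \<in> borel_measurable borel"
    and c: "(\<integral>\<^sup>+x. f x \<partial>lborel) = c" "c \<noteq> 0" "c < \<infinity>"
  shows "prob_space (density lborel (\<lambda>x. f x / c))"
proof
  have "emeasure (density lborel (\<lambda>x. f x / c)) UNIV = (\<integral>\<^sup>+x. f x / c \<partial>lborel)"
    by (subst emeasure_density) (auto simp: measurable_lborel1)
  also have "\<dots> = (\<integral>\<^sup>+x. f x \<partial>lborel) / c" by (rule nn_integral_divide) (simp add: measurable_lborel1)
  also have "\<dots> = 1" using c by simp
  finally show "emeasure (density lborel (\<lambda>x. f x / c)) (space (density lborel (\<lambda>x. f x / c))) = 1"
    by simp
qed

lemma density_kernel_measurable:
  fixes q :: "real \<Rightarrow> real \<Rightarrow> ennreal"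
  assumes q[measurable]: "(\<lambda>(a, x). q a x) \<in> borel_measurable (lborel \<Otimes>\<^sub>M lborel)"
    and prob: "\<And>a. prob_space (density lborel (q a))"
  shows "(\<lambda>a. density lborel (q a)) \<in> borel \<rightarrow>\<^sub>M prob_algebra borel"
proof (rule measurable_prob_algebra_generated[where \<Omega>=UNIV and G="sets borel"])
  show "sets borel = sigma_sets UNIV (sets borel)"
    by (metis sets.sigma_sets_eq space_borel)
  show "Int_stable (sets (borel::real measure))" by (auto simp: Int_stable_def)
  show "sets borel \<subseteq> Pow UNIV" by simp
  show "\<And>a. a \<in> space borel \<Longrightarrow> prob_space (density lborel (q a))" by (rule prob)
  show "\<And>a. a \<in> space borel \<Longrightarrow> sets (density lborel (q a)) = sets borel" by simp
  fix A :: "real set" assume A: "A \<in> sets borel"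
  have qa: "\<And>a. q a \<in> borel_measurable lborel" using measurable_Pair2[OF q] by simp
  have Al[measurable]: "A \<in> sets lborel" using A by simp
  have "(\<lambda>a. \<integral>\<^sup>+x. q a x * indicator A x \<partial>lborel) \<in> borel_measurable lborel" by measurable
  then show "(\<lambda>a. emeasure (density lborel (q a)) A) \<in> borel_measurable borel"
    by (simp add: emeasure_density[OF qa Al] measurable_lborel1)
qed

lemma kernel_emeasure_measurable:
  assumes "K \<in> M \<rightarrow>\<^sub>M prob_algebra N" "A \<in> sets N"
  shows "(\<lambda>a. emeasure (K a) A) \<in> borel_measurable M"
  by (rule measurable_compose[OF measurable_prob_algebraD[OF assms(1)]
        measurable_emeasure_subprob_algebra[OF assms(2)]])

lemma emeasure_density_ge:
  assumes f[measurable]: "f \<in> borel_measurable lborel"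
    and sets[measurable]: "S \<in> sets lborel" "A \<in> sets lborel"
    and lower: "\<And>x. x \<in> S \<Longrightarrow> ennreal c \<le> f x"
  shows "ennreal c * emeasure lborel (A \<inter> S) \<le> emeasure (density lborel f) A"
proof -
  have "ennreal c * emeasure lborel (A \<inter> S) = (\<integral>\<^sup>+x. ennreal c * indicator (A \<inter> S) x \<partial>lborel)"
    by (simp add: nn_integral_cmult_indicator)
  also have "\<dots> \<le> (\<integral>\<^sup>+x. f x * indicator A x \<partial>lborel)"
    by (intro nn_integral_mono) (auto simp: lower split: split_indicator)
  also have "\<dots> = emeasure (density lborel f) A" by (rule emeasure_density[symmetric]) (use sets in auto)
  finally show ?thesis .
qed

lemma ennreal_divide_cancel_left:
  fixes a b e Z :: ennreal
  assumes "0 < a" "a < \<infinity>"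
  shows "(a / Z) * (b / a * e) = b / Z * e"
proof -
  have 1: "a * inverse a = 1" using ennreal_divide_self[of a] assms by (simp add: divide_ennreal_def)
  have "(a / Z) * (b / a * e) = (a * inverse a) * (b * inverse Z * e)"
    by (simp add: divide_ennreal_def ac_simps)
  also have "\<dots> = b / Z * e" using 1 by (simp add: divide_ennreal_def)
  finally show ?thesis .
qed

lemma ennreal_divide_ge_bound:
  assumes "0 \<le> x" "0 < m" "m \<le> ennreal B"
  shows "ennreal (x / B) \<le> ennreal x / m"
proof -
  have "0 < ennreal B" using assms(2,3) by (rule less_le_trans)
  then have Bp: "0 < B" by simp
  obtain r where m: "m = ennreal r" "0 < r"
    using assms(2,3) by (cases m) (auto simp: top_unique)
  then have "r \<le> B" using assms(3) Bp by simp
  then have "x / B \<le> x / r" using m assms(1) by (simp add: divide_left_mono)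
  then show ?thesis using m assms(1) by (simp add: divide_ennreal ennreal_leI)
qed

lemma continuous_pos_lower_bound_box:
  fixes f :: "real \<times> real \<Rightarrow> real"
  assumes "continuous_on UNIV f" "\<And>z. 0 < f z"
  shows "\<exists>c>0. \<forall>u t. \<bar>u\<bar> \<le> a \<and> \<bar>t\<bar> \<le> b \<longrightarrow> c \<le> f (u, t)"
proof (cases "0 \<le> a \<and> 0 \<le> b")
  case True
  have "compact ({-a..a} \<times> {-b..b})" by (intro compact_Times compact_Icc)
  moreover have "{-a..a} \<times> {-b..b} \<noteq> {}" using True by auto
  moreover have "continuous_on ({-a..a} \<times> {-b..b}) f" using assms(1) continuous_on_subset by blast
  ultimately obtain z where z: "z \<in> {-a..a} \<times> {-b..b}" "\<forall>w \<in> {-a..a} \<times> {-b..b}. f z \<le> f w"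
    using continuous_attains_inf by blast
  show ?thesis
    by (rule exI[of _ "f z"]) (use z assms(2) in \<open>auto simp: abs_le_iff\<close>)
next
  case False
  then show ?thesis by (intro exI[of _ 1]) auto
qed

lemma emeasure_bind_ge:
  assumes M: "M \<in> space (prob_algebra N)" and K: "K \<in> N \<rightarrow>\<^sub>M prob_algebra L"
    and S: "S \<in> sets N" and A: "A \<in> sets L"
    and lower: "\<And>x. x \<in> S \<Longrightarrow> c \<le> emeasure (K x) A"
  shows "emeasure M S * c \<le> emeasure (bind M K) A"
proof -
  have sets_M: "sets M = sets N" using M by (simp add: space_prob_algebra)
  have "emeasure M S * c = (\<integral>\<^sup>+x. c * indicator S x \<partial>M)"
    using S sets_M by (simp add: nn_integral_cmult_indicator mult.commute)
  also have "\<dots> \<le> (\<integral>\<^sup>+x. emeasure (K x) A \<partial>M)"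
    by (intro nn_integral_mono) (auto simp: lower split: split_indicator)
  also have "\<dots> = emeasure (bind M K) A"
    by (rule emeasure_bind_prob_algebra[OF M K A, symmetric])
  finally show ?thesis .
qed

definition unif_mass :: "real set \<Rightarrow> real" where
  "unif_mass A = measure lborel (A \<inter> {-1..1}) / 2"

lemma unif_mass_nonneg: "0 \<le> unif_mass A"
  by (simp add: unif_mass_def)

lemma emeasure_unif: "emeasure lborel (A \<inter> {-1..1}) = ennreal (2 * unif_mass A)"
proof -
  have "emeasure lborel (A \<inter> {-1..1}) \<le> emeasure lborel {-1..1::real}"
    by (rule emeasure_mono) auto
  moreover have "emeasure lborel {-1..1::real} \<noteq> top" by simp
  ultimately have "emeasure lborel (A \<inter> {-1..1}) \<noteq> top" using neq_top_trans by blast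
  then show ?thesis by (simp add: unif_mass_def emeasure_eq_ennreal_measure)
qed

lemma unif_mass_compl:
  assumes "A \<in> sets borel"
  shows "unif_mass A + unif_mass (UNIV - A) = 1"
proof -
  have "measure lborel ((A \<inter> {-1..1}) \<union> ((UNIV - A) \<inter> {-1..1}))
        = measure lborel (A \<inter> {-1..1}) + measure lborel ((UNIV - A) \<inter> {-1..1})"
    by (rule measure_Union) (use assms emeasure_unif in auto)
  moreover have "(A \<inter> {-1..1}) \<union> ((UNIV - A) \<inter> {-1..1}) = {-1..(1::real)}" by auto
  ultimately show ?thesis by (simp add: unif_mass_def)
qed

subsection \<open>Joint densities and their Gibbs sampler\<close>

locale gibbs_density =
  fixes p :: "real \<Rightarrow> real \<Rightarrow> real" and B :: real
  assumes cont: "continuous_on UNIV (\<lambda>z. p (fst z) (snd z))"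
    and pos: "\<And>u t. 0 < p u t"
    and section_U_le: "\<And>t. (\<integral>\<^sup>+u. ennreal (p u t) \<partial>lborel) \<le> ennreal B"
    and section_Theta_le: "\<And>u. (\<integral>\<^sup>+t. ennreal (p u t) \<partial>lborel) \<le> ennreal B"
    and total_finite: "(\<integral>\<^sup>+u. \<integral>\<^sup>+t. ennreal (p u t) \<partial>lborel \<partial>lborel) < \<infinity>"
begin

lemma p_measurable: "(\<lambda>z. p (fst z) (snd z)) \<in> borel_measurable borel"
  by (rule borel_measurable_continuous_onI[OF cont])

lemma p_measurable_pair[measurable]: "(\<lambda>(u, t). p u t) \<in> borel_measurable (lborel \<Otimes>\<^sub>M lborel)"
  using p_measurable unfolding lborel_prod by (simp add: measurable_lborel1 case_prod_beta)

lemma p_measurable_pair_swap[measurable]: "(\<lambda>(t, u). p u t) \<in> borel_measurable (lborel \<Otimes>\<^sub>M lborel)"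
proof -
  have "(\<lambda>z::real \<times> real. (snd z, fst z)) \<in> borel_measurable borel"
    by (intro borel_measurable_continuous_onI continuous_intros)
  from measurable_compose[OF this p_measurable] show ?thesis
    unfolding lborel_prod by (simp add: measurable_lborel1 comp_def case_prod_beta)
qed

lemma p_measurable_U[measurable]: "(\<lambda>u. p u t) \<in> borel_measurable borel"
proof -
  have "(\<lambda>u::real. (u, t)) \<in> borel_measurable borel"
    by (intro borel_measurable_continuous_onI continuous_intros)
  from measurable_compose[OF this p_measurable] show ?thesis by simp
qed

lemma p_measurable_Theta[measurable]: "(\<lambda>t. p u t) \<in> borel_measurable borel"
proof -
  have "(\<lambda>t::real. (u, t)) \<in> borel_measurable borel"
    by (intro borel_measurable_continuous_onI continuous_intros)
  from measurable_compose[OF this p_measurable] show ?thesis by simp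
qed

definition "dens_Theta t = (\<integral>\<^sup>+u. ennreal (p u t) \<partial>lborel)"
definition "dens_U u = (\<integral>\<^sup>+t. ennreal (p u t) \<partial>lborel)"
definition "mass = (\<integral>\<^sup>+t. dens_Theta t \<partial>lborel)"

lemma dens_Theta_measurable[measurable]: "dens_Theta \<in> borel_measurable lborel"
  unfolding dens_Theta_def[abs_def] by measurable

lemma dens_U_measurable[measurable]: "dens_U \<in> borel_measurable lborel"
  unfolding dens_U_def[abs_def] by measurable

lemma dens_Theta_pos: "0 < dens_Theta t"
  unfolding dens_Theta_def by (rule nn_integral_pos_of_pos[OF p_measurable_U pos])

lemma dens_U_pos: "0 < dens_U u"
  unfolding dens_U_def by (rule nn_integral_pos_of_pos[OF p_measurable_Theta pos])

lemma dens_Theta_le: "dens_Theta t \<le> ennreal B"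
  unfolding dens_Theta_def by (rule section_U_le)

lemma dens_U_le: "dens_U u \<le> ennreal B"
  unfolding dens_U_def by (rule section_Theta_le)

lemma dens_Theta_finite: "dens_Theta t < \<infinity>"
  using dens_Theta_le[of t] by (simp add: le_less_trans)

lemma dens_U_finite: "dens_U u < \<infinity>"
  using dens_U_le[of u] by (simp add: le_less_trans)

lemma B_pos: "0 < B"
  using less_le_trans[OF dens_Theta_pos dens_Theta_le] by simp

lemma mass_finite: "mass < \<infinity>"
proof -
  have "mass = (\<integral>\<^sup>+u. dens_U u \<partial>lborel)"
    unfolding mass_def dens_Theta_def dens_U_def by (rule lborel_pair.Fubini') measurable
  then show ?thesis using total_finite by (simp add: dens_U_def)
qed

lemma mass_pos: "0 < mass"
proof -
  have "0 < (\<integral>\<^sup>+t. ennreal (enn2real (dens_Theta t)) \<partial>lborel)"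
    by (rule nn_integral_pos_of_pos)
       (use dens_Theta_pos dens_Theta_finite in \<open>auto simp: enn2real_positive_iff\<close>)
  also have "\<dots> = mass"
    unfolding mass_def
    by (rule nn_integral_cong) (use dens_Theta_finite in \<open>simp add: less_top\<close>)
  finally show ?thesis .
qed

lemma cond_U_eq: "cond_U p t = density lborel (\<lambda>u. ennreal (p u t) / dens_Theta t)"
  unfolding cond_U_def dens_Theta_def ..

lemma cond_Theta_eq: "cond_Theta p u = density lborel (\<lambda>t. ennreal (p u t) / dens_U u)"
  unfolding cond_Theta_def dens_U_def ..

lemma marg_Theta_eq: "marg_Theta p = density lborel (\<lambda>t. dens_Theta t / mass)"
  unfolding marg_Theta_def mass_def dens_Theta_def ..

lemma cond_U_prob: "prob_space (cond_U p t)"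
  unfolding cond_U_eq
  by (rule prob_space_normalised_density)
     (use dens_Theta_pos[of t] dens_Theta_finite[of t] in \<open>auto simp: dens_Theta_def\<close>)

lemma cond_Theta_prob: "prob_space (cond_Theta p u)"
  unfolding cond_Theta_eq
  by (rule prob_space_normalised_density)
     (use dens_U_pos[of u] dens_U_finite[of u] in \<open>auto simp: dens_U_def\<close>)

lemma marg_Theta_in_prob_algebra: "marg_Theta p \<in> space (prob_algebra borel)"
proof -
  have "prob_space (marg_Theta p)"
    unfolding marg_Theta_eq
    by (rule prob_space_normalised_density) (use mass_pos mass_finite in \<open>auto simp: mass_def\<close>)
  then show ?thesis by (simp add: space_prob_algebra marg_Theta_eq)
qed

lemma cond_U_in_prob_algebra: "cond_U p t \<in> space (prob_algebra borel)"
  using cond_U_prob by (simp add: space_prob_algebra cond_U_eq)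

lemma cond_U_kernel[measurable]: "cond_U p \<in> borel \<rightarrow>\<^sub>M prob_algebra borel"
proof -
  have "(\<lambda>t. density lborel (\<lambda>u. ennreal (p u t) / dens_Theta t)) \<in> borel \<rightarrow>\<^sub>M prob_algebra borel"
    by (rule density_kernel_measurable) (measurable, use cond_U_prob in \<open>simp add: cond_U_eq\<close>)
  then show ?thesis unfolding cond_U_eq[abs_def] .
qed

lemma cond_Theta_kernel[measurable]: "cond_Theta p \<in> borel \<rightarrow>\<^sub>M prob_algebra borel"
proof -
  have "(\<lambda>u. density lborel (\<lambda>t. ennreal (p u t) / dens_U u)) \<in> borel \<rightarrow>\<^sub>M prob_algebra borel"
    by (rule density_kernel_measurable) (measurable, use cond_Theta_prob in \<open>simp add: cond_Theta_eq\<close>)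
  then show ?thesis unfolding cond_Theta_eq[abs_def] .
qed

lemma gibbs_step_kernel[measurable]: "gibbs_step p \<in> borel \<rightarrow>\<^sub>M prob_algebra borel"
  unfolding gibbs_step_def[abs_def] by (rule measurable_bind_prob_space[OF cond_U_kernel cond_Theta_kernel])

lemma gibbs_step_prob: "prob_space (gibbs_step p t)"
  using measurable_space[OF gibbs_step_kernel, of t] by (simp add: space_prob_algebra)

lemma gibbs_dist_in_prob_algebra: "gibbs_dist p t0 k \<in> space (prob_algebra borel)"
proof (induction k)
  case 0
  then show ?case by (simp add: space_prob_algebra prob_space_return)
next
  case (Suc k)
  show ?case
    using measurable_space[OF measurable_bind_prob_space[OF measurable_const[OF Suc] gibbs_step_kernel],
        of undefined "count_space UNIV"]
    by simp
qed

lemma cond_Theta_emeasure: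
  "A \<in> sets borel \<Longrightarrow> emeasure (cond_Theta p u) A = (\<integral>\<^sup>+s. ennreal (p u s) / dens_U u * indicator A s \<partial>lborel)"
  unfolding cond_Theta_eq by (subst emeasure_density) auto

lemma gibbs_step_emeasure:
  assumes A: "A \<in> sets borel"
  shows "emeasure (gibbs_step p t) A
         = (\<integral>\<^sup>+u. ennreal (p u t) / dens_Theta t * emeasure (cond_Theta p u) A \<partial>lborel)"
proof -
  have [measurable]: "(\<lambda>u. emeasure (cond_Theta p u) A) \<in> borel_measurable lborel"
    using kernel_emeasure_measurable[OF cond_Theta_kernel A] by (simp add: measurable_lborel1)
  have "emeasure (gibbs_step p t) A = (\<integral>\<^sup>+u. emeasure (cond_Theta p u) A \<partial>cond_U p t)"
    unfolding gibbs_step_def by (rule emeasure_bind_prob_algebra[OF cond_U_in_prob_algebra cond_Theta_kernel A])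
  also have "\<dots> = (\<integral>\<^sup>+u. ennreal (p u t) / dens_Theta t * emeasure (cond_Theta p u) A \<partial>lborel)"
    unfolding cond_U_eq by (rule nn_integral_density) auto
  finally show ?thesis .
qed

text \<open>Drawing U from its marginal and then \<Theta> from cond_Theta reproduces the \<Theta>-marginal;
  written with the joint density p / mass in place of the U-marginal.\<close>
lemma joint_cond_Theta_eq_marg_Theta:
  assumes A[measurable]: "A \<in> sets borel"
  shows "(\<integral>\<^sup>+u. \<integral>\<^sup>+t. ennreal (p u t) / mass * emeasure (cond_Theta p u) A \<partial>lborel \<partial>lborel)
         = emeasure (marg_Theta p) A"
proof -
  have section_eq: "(\<integral>\<^sup>+t. ennreal (p u t) / mass * emeasure (cond_Theta p u) A \<partial>lborel)
                 = (\<integral>\<^sup>+s. ennreal (p u s) / mass * indicator A s \<partial>lborel)" for u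
  proof -
    have "(\<integral>\<^sup>+t. ennreal (p u t) / mass * emeasure (cond_Theta p u) A \<partial>lborel)
          = (\<integral>\<^sup>+t. ennreal (p u t) * (emeasure (cond_Theta p u) A / mass) \<partial>lborel)"
      by (simp add: divide_ennreal_def ac_simps)
    also have "\<dots> = dens_U u / mass * emeasure (cond_Theta p u) A"
      unfolding dens_U_def by (subst nn_integral_multc) (auto simp: divide_ennreal_def ac_simps)
    also have "\<dots> = (\<integral>\<^sup>+s. dens_U u / mass * (ennreal (p u s) / dens_U u * indicator A s) \<partial>lborel)"
      by (simp add: cond_Theta_emeasure[OF A] nn_integral_cmult)
    also have "\<dots> = (\<integral>\<^sup>+s. ennreal (p u s) / mass * indicator A s \<partial>lborel)"
      by (intro nn_integral_cong ennreal_divide_cancel_left dens_U_pos dens_U_finite)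
    finally show ?thesis .
  qed
  have "(\<integral>\<^sup>+u. \<integral>\<^sup>+t. ennreal (p u t) / mass * emeasure (cond_Theta p u) A \<partial>lborel \<partial>lborel)
        = (\<integral>\<^sup>+u. \<integral>\<^sup>+s. ennreal (p u s) / mass * indicator A s \<partial>lborel \<partial>lborel)"
    by (intro nn_integral_cong section_eq)
  also have "\<dots> = (\<integral>\<^sup>+s. \<integral>\<^sup>+u. ennreal (p u s) / mass * indicator A s \<partial>lborel \<partial>lborel)"
    by (rule lborel_pair.Fubini'[symmetric]) measurable
  also have "\<dots> = (\<integral>\<^sup>+s. \<integral>\<^sup>+u. ennreal (p u s) * (indicator A s / mass) \<partial>lborel \<partial>lborel)"
    by (simp add: divide_ennreal_def ac_simps)
  also have "\<dots> = (\<integral>\<^sup>+s. dens_Theta s / mass * indicator A s \<partial>lborel)"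
    unfolding dens_Theta_def
    by (intro nn_integral_cong, subst nn_integral_multc) (auto simp: divide_ennreal_def ac_simps)
  also have "\<dots> = emeasure (marg_Theta p) A"
    unfolding marg_Theta_eq by (rule emeasure_density[symmetric]) auto
  finally show ?thesis .
qed

text \<open>Stationarity: one sweep started from the \<Theta>-marginal first draws U given \<Theta>, which
  produces the joint law; after exchanging the order of integration the previous lemma applies.\<close>
lemma marg_Theta_stationary: "bind (marg_Theta p) (gibbs_step p) = marg_Theta p"
proof (rule measure_eqI)
  have sets_bind: "sets (bind (marg_Theta p) (gibbs_step p)) = sets borel"
    using sets_bind'[OF marg_Theta_in_prob_algebra gibbs_step_kernel] by simp
  then show "sets (bind (marg_Theta p) (gibbs_step p)) = sets (marg_Theta p)"
    by (simp add: marg_Theta_eq)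
  fix A assume "A \<in> sets (bind (marg_Theta p) (gibbs_step p))"
  then have A[measurable]: "A \<in> sets borel" using sets_bind by simp
  define E where "E u = emeasure (cond_Theta p u) A" for u
  have [measurable]: "E \<in> borel_measurable lborel"
    using kernel_emeasure_measurable[OF cond_Theta_kernel A] unfolding E_def[abs_def]
    by (simp add: measurable_lborel1)
  have [measurable]: "(\<lambda>t. emeasure (gibbs_step p t) A) \<in> borel_measurable lborel"
    using kernel_emeasure_measurable[OF gibbs_step_kernel A] by (simp add: measurable_lborel1)
  have joint: "dens_Theta t / mass * emeasure (gibbs_step p t) A
               = (\<integral>\<^sup>+u. ennreal (p u t) / mass * E u \<partial>lborel)" for t
  proof -
    have "dens_Theta t / mass * emeasure (gibbs_step p t) A
          = (\<integral>\<^sup>+u. dens_Theta t / mass * (ennreal (p u t) / dens_Theta t * E u) \<partial>lborel)"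
      by (simp add: gibbs_step_emeasure[OF A] E_def[symmetric] nn_integral_cmult)
    also have "\<dots> = (\<integral>\<^sup>+u. ennreal (p u t) / mass * E u \<partial>lborel)"
      by (intro nn_integral_cong ennreal_divide_cancel_left dens_Theta_pos dens_Theta_finite)
    finally show ?thesis .
  qed
  have "emeasure (bind (marg_Theta p) (gibbs_step p)) A
        = (\<integral>\<^sup>+t. emeasure (gibbs_step p t) A \<partial>marg_Theta p)"
    by (rule emeasure_bind_prob_algebra[OF marg_Theta_in_prob_algebra gibbs_step_kernel A])
  also have "\<dots> = (\<integral>\<^sup>+t. \<integral>\<^sup>+u. ennreal (p u t) / mass * E u \<partial>lborel \<partial>lborel)"
    unfolding marg_Theta_eq joint[symmetric] by (rule nn_integral_density) auto
  also have "\<dots> = (\<integral>\<^sup>+u. \<integral>\<^sup>+t. ennreal (p u t) / mass * E u \<partial>lborel \<partial>lborel)"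
    by (rule lborel_pair.Fubini') measurable
  also have "\<dots> = emeasure (marg_Theta p) A"
    unfolding E_def by (rule joint_cond_Theta_eq_marg_Theta[OF A])
  finally show "emeasure (bind (marg_Theta p) (gibbs_step p)) A = emeasure (marg_Theta p) A" .
qed

subsection \<open>Doeblin minorisation implies uniform ergodicity\<close>

definition doeblin :: "real \<Rightarrow> bool" where
  "doeblin \<epsilon> \<longleftrightarrow> 0 < \<epsilon> \<and> \<epsilon> \<le> 1 \<and>
     (\<forall>t A. A \<in> sets borel \<longrightarrow> \<epsilon> * unif_mass A \<le> measure (gibbs_step p t) A)"

text \<open>Under the Doeblin condition the residual K(t, A) - \<epsilon> Unif(A) lies in [0, 1 - \<epsilon>]; the
  upper bound comes from applying the minorisation to the complement of A.\<close>
lemma doeblin_residual: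
  assumes doeb: "doeblin \<epsilon>" and A: "A \<in> sets borel"
  shows "0 \<le> measure (gibbs_step p t) A - \<epsilon> * unif_mass A"
    and "measure (gibbs_step p t) A - \<epsilon> * unif_mass A \<le> 1 - \<epsilon>"
proof -
  interpret prob_space "gibbs_step p t" by (rule gibbs_step_prob)
  have sets_K: "sets (gibbs_step p t) = sets borel"
    using measurable_space[OF gibbs_step_kernel, of t] by (simp add: space_prob_algebra)
  have compl: "prob (UNIV - A) = 1 - prob A"
    using prob_compl[of A] A sets_K sets_eq_imp_space_eq[OF sets_K] by simp
  have "UNIV - A \<in> sets borel" using A by auto
  then have "\<epsilon> * unif_mass (UNIV - A) \<le> prob (UNIV - A)" "\<epsilon> * unif_mass A \<le> prob A"
    using doeb A unfolding doeblin_def by auto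
  moreover have "\<epsilon> * unif_mass A + \<epsilon> * unif_mass (UNIV - A) = \<epsilon>"
    using unif_mass_compl[OF A] by (metis distrib_left mult_1_right)
  ultimately show "0 \<le> prob A - \<epsilon> * unif_mass A" "prob A - \<epsilon> * unif_mass A \<le> 1 - \<epsilon>"
    using compl by linarith+
qed

lemma emeasure_bind_gibbs_step:
  assumes doeb: "doeblin \<epsilon>" and A: "A \<in> sets borel" and M: "M \<in> space (prob_algebra borel)"
  shows "emeasure (bind M (gibbs_step p)) A
         = (\<integral>\<^sup>+t. ennreal (measure (gibbs_step p t) A - \<epsilon> * unif_mass A) \<partial>M) + ennreal (\<epsilon> * unif_mass A)"
proof -
  interpret prob_space M using M by (simp add: space_prob_algebra)
  have sets_M: "sets M = sets borel" using M by (simp add: space_prob_algebra)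
  have "emeasure (bind M (gibbs_step p)) A = (\<integral>\<^sup>+t. emeasure (gibbs_step p t) A \<partial>M)"
    by (rule emeasure_bind_prob_algebra[OF M gibbs_step_kernel A])
  also have "\<dots> = (\<integral>\<^sup>+t. ennreal (measure (gibbs_step p t) A - \<epsilon> * unif_mass A)
                        + ennreal (\<epsilon> * unif_mass A) \<partial>M)"
  proof (rule nn_integral_cong)
    fix t
    interpret K: prob_space "gibbs_step p t" by (rule gibbs_step_prob)
    show "emeasure (gibbs_step p t) A = ennreal (measure (gibbs_step p t) A - \<epsilon> * unif_mass A)
                                        + ennreal (\<epsilon> * unif_mass A)"
      using doeblin_residual(1)[OF doeb A, of t] doeb unif_mass_nonneg[of A]
      by (simp add: K.emeasure_eq_measure doeblin_def ennreal_plus[symmetric])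
  qed
  also have "\<dots> = (\<integral>\<^sup>+t. ennreal (measure (gibbs_step p t) A - \<epsilon> * unif_mass A) \<partial>M)
                 + (\<integral>\<^sup>+t. ennreal (\<epsilon> * unif_mass A) \<partial>M)"
    using measurable_compose[OF gibbs_step_kernel measurable_measure_prob_algebra[OF A]]
    by (intro nn_integral_add) (auto simp: measurable_cong_sets[OF sets_M refl])
  also have "(\<integral>\<^sup>+t. ennreal (\<epsilon> * unif_mass A) \<partial>M) = ennreal (\<epsilon> * unif_mass A)"
    by (simp add: emeasure_space_1)
  finally show ?thesis .
qed

text \<open>Contraction: if two initial laws are setwise T-close (one-sidedly), their images under the
  sweep are (1 - \<epsilon>) T-close.  Only the residual part of the kernel sees the difference.\<close>
lemma gibbs_step_contracts:
  assumes doeb: "doeblin \<epsilon>"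
    and mu: "\<mu> \<in> space (prob_algebra borel)" and mu': "\<mu>' \<in> space (prob_algebra borel)"
    and T: "0 \<le> T" "\<And>A. A \<in> sets borel \<Longrightarrow> measure \<mu> A \<le> measure \<mu>' A + T"
    and A: "A \<in> sets borel"
  shows "measure (bind \<mu> (gibbs_step p)) A \<le> measure (bind \<mu>' (gibbs_step p)) A + (1 - \<epsilon>) * T"
proof -
  define h where "h t = measure (gibbs_step p t) A - \<epsilon> * unif_mass A" for t
  have h_measurable: "h \<in> borel_measurable borel"
    unfolding h_def[abs_def]
    using measurable_compose[OF gibbs_step_kernel measurable_measure_prob_algebra[OF A]] by measurable
  have "(\<integral>\<^sup>+t. ennreal (h t) \<partial>\<mu>) \<le> (\<integral>\<^sup>+t. ennreal (h t) \<partial>\<mu>') + ennreal ((1 - \<epsilon>) * T)"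
    using mu mu' doeblin_residual[OF doeb A]
    by (intro nn_integral_le_of_setwise_le[OF _ _ _ _ h_measurable _ _ T])
       (auto simp: space_prob_algebra h_def)
  then have le: "emeasure (bind \<mu> (gibbs_step p)) A
             \<le> emeasure (bind \<mu>' (gibbs_step p)) A + ennreal ((1 - \<epsilon>) * T)"
    unfolding emeasure_bind_gibbs_step[OF doeb A mu] emeasure_bind_gibbs_step[OF doeb A mu'] h_def[symmetric]
    by (metis add.commute add.left_commute add_right_mono)
  interpret B1: prob_space "bind \<mu> (gibbs_step p)" by (rule prob_space_bind'[OF mu gibbs_step_kernel])
  interpret B2: prob_space "bind \<mu>' (gibbs_step p)" by (rule prob_space_bind'[OF mu' gibbs_step_kernel])
  show ?thesis
    using le doeb T(1) unfolding doeblin_def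
    by (simp add: B1.emeasure_eq_measure B2.emeasure_eq_measure ennreal_plus[symmetric] del: ennreal_plus)
qed

text \<open>Iterating the contraction from the stationary law: after k sweeps every event has
  probability within (1 - \<epsilon>)^k of its stationary probability, whatever the start.\<close>
lemma uniformly_ergodic_of_doeblin:
  assumes doeb: "doeblin \<epsilon>"
  shows "uniformly_ergodic p"
proof -
  let ?\<pi> = "marg_Theta p"
  have eps: "0 < \<epsilon>" "\<epsilon> \<le> 1" using doeb by (auto simp: doeblin_def)
  have close: "\<bar>measure (gibbs_dist p t0 k) A - measure ?\<pi> A\<bar> \<le> (1 - \<epsilon>) ^ k"
    if "A \<in> sets borel" for t0 k A
    using that
  proof (induction k arbitrary: A)
    case 0
    interpret P: prob_space "gibbs_dist p t0 0"
      using gibbs_dist_in_prob_algebra[of t0 0] by (simp add: space_prob_algebra)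
    interpret Q: prob_space ?\<pi> using marg_Theta_in_prob_algebra by (simp add: space_prob_algebra)
    have "P.prob A \<le> 1" "Q.prob A \<le> 1" by (rule P.prob_le_1, rule Q.prob_le_1)
    moreover have "0 \<le> P.prob A" "0 \<le> Q.prob A" by (rule measure_nonneg)+
    ultimately show ?case by (simp only: abs_le_iff power_0) linarith
  next
    case (Suc k)
    have T0: "0 \<le> (1 - \<epsilon>) ^ k" using eps by simp
    have IH: "measure (gibbs_dist p t0 k) B \<le> measure ?\<pi> B + (1 - \<epsilon>) ^ k"
      "measure ?\<pi> B \<le> measure (gibbs_dist p t0 k) B + (1 - \<epsilon>) ^ k"
      if "B \<in> sets borel" for B
      using Suc.IH[OF that] by (auto simp: abs_le_iff)
    have "measure (bind (gibbs_dist p t0 k) (gibbs_step p)) A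
          \<le> measure (bind ?\<pi> (gibbs_step p)) A + (1 - \<epsilon>) * (1 - \<epsilon>) ^ k"
      by (rule gibbs_step_contracts[OF doeb gibbs_dist_in_prob_algebra
            marg_Theta_in_prob_algebra T0 IH(1) Suc.prems])
    moreover have "measure (bind ?\<pi> (gibbs_step p)) A
          \<le> measure (bind (gibbs_dist p t0 k) (gibbs_step p)) A + (1 - \<epsilon>) * (1 - \<epsilon>) ^ k"
      by (rule gibbs_step_contracts[OF doeb marg_Theta_in_prob_algebra
            gibbs_dist_in_prob_algebra T0 IH(2) Suc.prems])
    ultimately show ?case unfolding marg_Theta_stationary by (simp add: abs_le_iff)
  qed
  have "tv_dist (gibbs_dist p t0 k) ?\<pi> \<le> 1 * (1 - \<epsilon>) ^ k" for t0 k
    unfolding tv_dist_def by (simp, rule cSUP_least) (auto intro: close)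
  then show ?thesis unfolding uniformly_ergodic_def
    by (intro exI[of _ "1 - \<epsilon>"] exI[of _ "\<lambda>_. 1"]) (use eps in auto)
qed

subsection \<open>Tightness and continuity give a Doeblin minorisation\<close>

text \<open>Since the normalising section integrals are at most B, a lower bound c on p gives the
  lower bound c / B on the conditional densities.\<close>
lemma cond_U_density_ge: "c \<le> p u t \<Longrightarrow> ennreal (c / B) \<le> ennreal (p u t) / dens_Theta t"
  using B_pos ennreal_divide_ge_bound[OF less_imp_le[OF pos] dens_Theta_pos dens_Theta_le]
  by (metis divide_right_mono ennreal_leI less_imp_le order_trans)

lemma cond_Theta_density_ge: "c \<le> p u t \<Longrightarrow> ennreal (c / B) \<le> ennreal (p u t) / dens_U u"
  using B_pos ennreal_divide_ge_bound[OF less_imp_le[OF pos] dens_U_pos dens_U_le]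
  by (metis divide_right_mono ennreal_leI less_imp_le order_trans)

lemma p_lower_bound_box: "\<exists>c>0. \<forall>u t. \<bar>u\<bar> \<le> a \<and> \<bar>t\<bar> \<le> b \<longrightarrow> c \<le> p u t"
  using continuous_pos_lower_bound_box[OF cont, of a b] pos by simp

text \<open>If U given \<Theta> = t keeps mass \<delta> in [-k, k] for all large |t|, then it keeps a uniform
  positive mass there for all t: for the remaining t the density is bounded below.\<close>
lemma cond_U_mass_uniform:
  assumes k: "0 < k" and \<delta>: "0 < \<delta>"
    and tight: "\<And>t. R \<le> \<bar>t\<bar> \<Longrightarrow> \<delta> \<le> measure (cond_U p t) {-k..k}"
  shows "\<exists>\<delta>0>0. \<forall>t. ennreal \<delta>0 \<le> emeasure (cond_U p t) {-k..k}"
proof -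
  obtain c where c: "0 < c" "\<And>u t. \<bar>u\<bar> \<le> k \<Longrightarrow> \<bar>t\<bar> \<le> \<bar>R\<bar> \<Longrightarrow> c \<le> p u t"
    using p_lower_bound_box[of k "\<bar>R\<bar>"] by auto
  define \<delta>0 where "\<delta>0 = min \<delta> (c / B * (2 * k))"
  have "ennreal \<delta>0 \<le> emeasure (cond_U p t) {-k..k}" for t
  proof (cases "R \<le> \<bar>t\<bar>")
    case True
    interpret prob_space "cond_U p t" by (rule cond_U_prob)
    have "\<delta>0 \<le> prob {-k..k}" using tight[OF True] by (simp add: \<delta>0_def)
    then show ?thesis by (simp add: emeasure_eq_measure ennreal_leI)
  next
    case False
    have "ennreal \<delta>0 \<le> ennreal (c / B) * emeasure lborel ({-k..k} \<inter> {-k..k})"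
      using k c(1) B_pos by (simp add: \<delta>0_def ennreal_mult'[symmetric] ennreal_leI mult.commute)
    also have "\<dots> \<le> emeasure (cond_U p t) {-k..k}"
      unfolding cond_U_eq
      by (rule emeasure_density_ge) (use False c(2) in \<open>auto intro!: cond_U_density_ge\<close>)
    finally show ?thesis .
  qed
  moreover have "0 < \<delta>0" using \<delta> k c(1) B_pos by (simp add: \<delta>0_def)
  ultimately show ?thesis by blast
qed

lemma cond_Theta_minorised:
  "\<exists>c>0. \<forall>u A. \<bar>u\<bar> \<le> k \<longrightarrow> A \<in> sets borel \<longrightarrow>
     ennreal (c * unif_mass A) \<le> emeasure (cond_Theta p u) A"
proof -
  obtain c where c: "0 < c" "\<And>u t. \<bar>u\<bar> \<le> k \<Longrightarrow> \<bar>t\<bar> \<le> 1 \<Longrightarrow> c \<le> p u t"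
    using p_lower_bound_box[of k 1] by auto
  have "ennreal (2 * c / B * unif_mass A) \<le> emeasure (cond_Theta p u) A"
    if "\<bar>u\<bar> \<le> k" "A \<in> sets borel" for u A
  proof -
    have "ennreal (2 * c / B * unif_mass A) = ennreal (c / B) * emeasure lborel (A \<inter> {-1..1})"
      using c(1) B_pos unif_mass_nonneg[of A]
      by (simp add: emeasure_unif ennreal_mult'[symmetric])
    also have "\<dots> \<le> emeasure (cond_Theta p u) A"
      unfolding cond_Theta_eq
      by (rule emeasure_density_ge) (use that c(2) in \<open>auto intro!: cond_Theta_density_ge\<close>)
    finally show ?thesis .
  qed
  moreover have "0 < 2 * c / B" using c(1) B_pos by simp
  ultimately show ?thesis by blast
qed

lemma doeblin_of_tight:
  assumes k: "0 < k" and \<delta>: "0 < \<delta>"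
    and tight: "\<And>t. R \<le> \<bar>t\<bar> \<Longrightarrow> \<delta> \<le> measure (cond_U p t) {-k..k}"
  shows "\<exists>\<epsilon>. doeblin \<epsilon>"
proof -
  obtain \<delta>0 where \<delta>0: "0 < \<delta>0" "\<And>t. ennreal \<delta>0 \<le> emeasure (cond_U p t) {-k..k}"
    using cond_U_mass_uniform[OF k \<delta> tight] by auto
  obtain c where c: "0 < c" "\<And>u A. \<bar>u\<bar> \<le> k \<Longrightarrow> A \<in> sets borel \<Longrightarrow>
                              ennreal (c * unif_mass A) \<le> emeasure (cond_Theta p u) A"
    using cond_Theta_minorised[of k] by auto
  define \<epsilon> where "\<epsilon> = min 1 (\<delta>0 * c)"
  have "\<epsilon> * unif_mass A \<le> measure (gibbs_step p t) A" if A: "A \<in> sets borel" for t A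
  proof -
    interpret prob_space "gibbs_step p t" by (rule gibbs_step_prob)
    have "ennreal \<delta>0 * ennreal (c * unif_mass A) \<le> emeasure (cond_U p t) {-k..k} * ennreal (c * unif_mass A)"
      by (intro mult_right_mono \<delta>0(2)) simp
    also have "\<dots> \<le> emeasure (gibbs_step p t) A"
      unfolding gibbs_step_def
      by (rule emeasure_bind_ge[OF cond_U_in_prob_algebra cond_Theta_kernel _ A])
         (auto intro: c(2)[OF _ A])
    finally have "\<delta>0 * c * unif_mass A \<le> prob A"
      using \<delta>0(1) c(1) unif_mass_nonneg[of A]
      by (simp add: emeasure_eq_measure ennreal_mult'[symmetric] mult.assoc)
    moreover have "\<epsilon> * unif_mass A \<le> \<delta>0 * c * unif_mass A"
      using unif_mass_nonneg[of A] by (intro mult_right_mono) (auto simp: \<epsilon>_def)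
    ultimately show ?thesis by linarith
  qed
  then have "doeblin \<epsilon>" using \<delta>0(1) c(1) by (auto simp: doeblin_def \<epsilon>_def)
  then show ?thesis ..
qed

text \<open>PTIP at the observed y: the limsup bound provides tightness of U given \<Theta> outside a
  compact set, hence a Doeblin minorisation and uniform ergodicity.\<close>
lemma uniformly_ergodic_of_limsup:
  assumes k: "0 < k"
    and L: "Limsup at_infinity (\<lambda>\<theta>. ereal (measure (cond_U p \<theta>) {u. k < \<bar>u\<bar>})) < 1"
  shows "uniformly_ergodic p"
proof -
  obtain r where r: "Limsup at_infinity (\<lambda>\<theta>. ereal (measure (cond_U p \<theta>) {u. k < \<bar>u\<bar>})) < ereal r"
    "ereal r < 1"
    using ereal_dense2[OF L] by blast
  then obtain R where R: "\<And>\<theta>. R \<le> norm \<theta> \<Longrightarrow> measure (cond_U p \<theta>) {u. k < \<bar>u\<bar>} < r"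
    using Limsup_lessD[OF r(1)] unfolding eventually_at_infinity by auto
  have "1 - r \<le> measure (cond_U p t) {-k..k}" if "R \<le> \<bar>t\<bar>" for t
  proof -
    interpret prob_space "cond_U p t" by (rule cond_U_prob)
    have "{u. k < \<bar>u\<bar>} \<in> sets borel" by measurable
    then have "prob (space (cond_U p t) - {u. k < \<bar>u\<bar>}) = 1 - prob {u. k < \<bar>u\<bar>}"
      by (intro prob_compl) (simp add: cond_U_eq)
    moreover have "space (cond_U p t) - {u. k < \<bar>u\<bar>} = {-k..k}" by (auto simp: cond_U_eq)
    ultimately show ?thesis using R[of t] that by simp
  qed
  moreover have "0 < 1 - r" using r(2) by simp
  ultimately obtain \<epsilon> where "doeblin \<epsilon>" using doeblin_of_tight[OF k] by blast
  then show ?thesis by (rule uniformly_ergodic_of_doeblin)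
qed

end

lemma uniformly_ergodic_if_PTIP:
  assumes "gibbs_density (P y) B" and "PTIP P"
  shows "uniformly_ergodic (P y)"
proof -
  obtain k where "0 < k" "Limsup at_infinity (\<lambda>\<theta>. ereal (measure (cond_U (P y) \<theta>) {u. k < \<bar>u\<bar>})) < 1"
    using assms(2) unfolding PTIP_def by blast
  then show ?thesis by (rule gibbs_density.uniformly_ergodic_of_limsup[OF assms(1)])
qed

subsection \<open>The two posterior densities\<close>

lemma nn_integral_const_times_density:
  fixes b :: "real \<Rightarrow> real"
  assumes "0 \<le> c" "\<And>x. 0 \<le> b x" "b \<in> borel_measurable borel" "(\<integral>\<^sup>+x. ennreal (b x) \<partial>lborel) = 1"
  shows "(\<integral>\<^sup>+x. ennreal (c * b x) \<partial>lborel) = ennreal c"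
  using assms by (simp add: ennreal_mult nn_integral_cmult measurable_lborel1)

lemma nn_integral_bounded_times_density:
  fixes a b :: "real \<Rightarrow> real"
  assumes a: "\<And>x. 0 \<le> a x" "\<And>x. a x \<le> B"
    and b: "\<And>x. 0 \<le> b x" "b \<in> borel_measurable borel" "(\<integral>\<^sup>+x. ennreal (b x) \<partial>lborel) = 1"
  shows "(\<integral>\<^sup>+x. ennreal (a x * b x) \<partial>lborel) \<le> ennreal B"
proof -
  have "(\<integral>\<^sup>+x. ennreal (a x * b x) \<partial>lborel) \<le> (\<integral>\<^sup>+x. ennreal (B * b x) \<partial>lborel)"
    using a b(1) by (intro nn_integral_mono ennreal_leI mult_right_mono) auto
  also have "\<dots> = ennreal B"
    using a b by (intro nn_integral_const_times_density) (auto intro: order_trans)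
  finally show ?thesis .
qed

locale noise_densities =
  fixes f1 f2 :: "real \<Rightarrow> real" and B :: real
  assumes dens1: "(\<integral>\<^sup>+x. ennreal (f1 x) \<partial>lborel) = 1"
    and dens2: "(\<integral>\<^sup>+x. ennreal (f2 x) \<partial>lborel) = 1"
    and cont1: "continuous_on UNIV f1" and cont2: "continuous_on UNIV f2"
    and pos1: "\<And>x. 0 < f1 x" and pos2: "\<And>x. 0 < f2 x"
    and le1: "\<And>x. f1 x \<le> B" and le2: "\<And>x. f2 x \<le> B"
begin

lemma f1_measurable[measurable]: "f1 \<in> borel_measurable borel"
  by (rule borel_measurable_continuous_onI[OF cont1])

lemma f2_measurable[measurable]: "f2 \<in> borel_measurable borel"
  by (rule borel_measurable_continuous_onI[OF cont2])

lemma f1_nonneg: "0 \<le> f1 x" and f2_nonneg: "0 \<le> f2 x"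
  using pos1 pos2 by (auto intro: less_imp_le)

lemma continuous_f1_comp: "continuous_on UNIV g \<Longrightarrow> continuous_on UNIV (\<lambda>z. f1 (g z))"
  by (rule continuous_on_compose2[OF cont1]) auto

lemma continuous_f2_comp: "continuous_on UNIV g \<Longrightarrow> continuous_on UNIV (\<lambda>z. f2 (g z))"
  by (rule continuous_on_compose2[OF cont2]) auto

lemma post0_gibbs_density: "gibbs_density (post0 f1 f2 y) B"
proof
  show "continuous_on UNIV (\<lambda>z. post0 f1 f2 y (fst z) (snd z))"
    unfolding post0_def by (intro continuous_intros continuous_f1_comp continuous_f2_comp)
  show "0 < post0 f1 f2 y u t" for u t unfolding post0_def using pos1 pos2 by simp
  show "(\<integral>\<^sup>+u. ennreal (post0 f1 f2 y u t) \<partial>lborel) \<le> ennreal B" for t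
    unfolding post0_def
    by (rule nn_integral_bounded_times_density)
       (auto simp: f1_nonneg f2_nonneg le1 nn_integral_shift dens2)
  show "(\<integral>\<^sup>+t. ennreal (post0 f1 f2 y u t) \<partial>lborel) \<le> ennreal B" for u
    unfolding post0_def
    by (rule nn_integral_bounded_times_density[where b="\<lambda>t. f2 (u - t)"])
       (auto simp: f1_nonneg f2_nonneg le1 nn_integral_reflect dens2)
  have "(\<integral>\<^sup>+u. \<integral>\<^sup>+t. ennreal (post0 f1 f2 y u t) \<partial>lborel \<partial>lborel) = (\<integral>\<^sup>+u. ennreal (f1 (y - u)) \<partial>lborel)"
    unfolding post0_def
    by (intro nn_integral_cong nn_integral_const_times_density)
       (auto simp: f1_nonneg f2_nonneg nn_integral_reflect dens2)
  also have "\<dots> = 1" by (simp add: nn_integral_reflect dens1)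
  finally show "(\<integral>\<^sup>+u. \<integral>\<^sup>+t. ennreal (post0 f1 f2 y u t) \<partial>lborel \<partial>lborel) < \<infinity>" by simp
qed

lemma post1_eq: "post1 f1 f2 y u t = f2 u * f1 (y - u - t)"
  unfolding post1_def post0_def by (simp add: diff_diff_eq mult.commute)

lemma post1_gibbs_density: "gibbs_density (post1 f1 f2 y) B"
proof
  show "continuous_on UNIV (\<lambda>z. post1 f1 f2 y (fst z) (snd z))"
    unfolding post1_eq by (intro continuous_intros continuous_f1_comp continuous_f2_comp)
  show "0 < post1 f1 f2 y u t" for u t unfolding post1_eq using pos1 pos2 by simp
  show "(\<integral>\<^sup>+u. ennreal (post1 f1 f2 y u t) \<partial>lborel) \<le> ennreal B" for t
    unfolding post1_eq mult.commute[of "f2 _"]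
    by (rule nn_integral_bounded_times_density) (auto simp: f1_nonneg f2_nonneg le1 dens2)
  have f1_reflect: "(\<integral>\<^sup>+t. ennreal (f1 (y - u - t)) \<partial>lborel) = 1" for u
    using nn_integral_reflect[OF f1_measurable, of "y - u"] dens1 by simp
  have section_Theta: "(\<integral>\<^sup>+t. ennreal (post1 f1 f2 y u t) \<partial>lborel) = ennreal (f2 u)" for u
    unfolding post1_eq
    by (rule nn_integral_const_times_density) (auto simp: f1_nonneg f2_nonneg f1_reflect)
  show "(\<integral>\<^sup>+t. ennreal (post1 f1 f2 y u t) \<partial>lborel) \<le> ennreal B" for u
    using le2[of u] by (simp add: section_Theta ennreal_leI)
  show "(\<integral>\<^sup>+u. \<integral>\<^sup>+t. ennreal (post1 f1 f2 y u t) \<partial>lborel \<partial>lborel) < \<infinity>"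
    by (simp add: section_Theta dens2)
qed

end

theorem mainTheorem1:
  fixes f1 f2 :: "real \<Rightarrow> real" and y :: real
  assumes dens1: "(\<integral>\<^sup>+ x. ennreal (f1 x) \<partial>lborel) = 1"
    and dens2: "(\<integral>\<^sup>+ x. ennreal (f2 x) \<partial>lborel) = 1"
    and sym1: "\<And>x. f1 (- x) = f1 x" and sym2: "\<And>x. f2 (- x) = f2 x"
    and cont1: "continuous_on UNIV f1" and cont2: "continuous_on UNIV f2"
    and bdd1: "bounded (range f1)" and bdd2: "bounded (range f2)"
    and pos1: "\<And>x. f1 x > 0" and pos2: "\<And>x. f2 x > 0"
    and proper: "(\<integral>\<^sup>+ \<theta>. \<integral>\<^sup>+ x. ennreal (post0 f1 f2 y x \<theta>) \<partial>lborel \<partial>lborel) < \<infinity>"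
  shows "(PTIP (post0 f1 f2) \<longrightarrow> uniformly_ergodic (post0 f1 f2 y)) \<and>
         (PTIP (post1 f1 f2) \<longrightarrow> uniformly_ergodic (post1 f1 f2 y))"
proof -
  have "bounded (range f1 \<union> range f2)" using bdd1 bdd2 by simp
  then obtain B where "\<And>x. f1 x \<le> B" "\<And>x. f2 x \<le> B"
    unfolding bounded_real by (meson UnCI rangeI abs_le_D1)
  then interpret noise_densities f1 f2 B
    by unfold_locales (use dens1 dens2 cont1 cont2 pos1 pos2 in auto)
  show ?thesis
    using uniformly_ergodic_if_PTIP[where P="post0 f1 f2", OF post0_gibbs_density]
      uniformly_ergodic_if_PTIP[where P="post1 f1 f2", OF post1_gibbs_density]
    by blast
qed

end
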